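(* Let $\mathsf N$ be odd and assume the setting below. For every $\lambda\ne0$ with $\mathsf B(\lambda)$ invertible and $\lambda\ne\pm\eta_a^{(h)}$ for all $a,h$, $$\langle t|\mathsf B^{-1}(\lambda)\mathsf A(\lambda)|t'\rangle=\det_{1\le a,b\le\mathsf N}\mathcal U^{(t,t')}_{a,b}(\lambda),$$ where for $b\in\{1,\dots,\mathsf N-1\}$ $$\mathcal U^{(t,t')}_{a,b}(\lambda)=(\eta_a^{(0)})^{2b-1}\sum_{c=1}^{p}q^{(2b-1)c}\frac{Q_{t'}(\eta_a^{(c)})\bar Q_t(\eta_a^{(c)})}{\omega_a(\eta_a^{(c)})},$$ $$\mathcal U^{(t,t')}_{a,\mathsf N}(\lambda)=\frac{(\eta_a^{(0)})^{\mathsf N-1}}{\textsc k}\sum_{h=1}^{p}\frac{q^{(\mathsf N-1)h}\,Q_{t'}(\eta_a^{(h)})\,\bar Q_t(\eta_a^{(h+1)})\,\bar a(\eta_a^{(h)})}{\omega_a(\eta_a^{(h)})\,\big(\lambda/\eta_a^{(h+1)}-\eta_a^{(h+1)}/\lambda\big)}.$$ Consequently, if moreover $\langle t|\mathsf U_n=\varphi_n^{(t)}\langle t|$ and $\mathsf U_n|t'\rangle=\varphi_n^{(t')}|t'\rangle$ with $\varphi_n^{(t')}\ne0$, and $\mathsf u_n=\mathsf U_n\mathsf B^{-1}(\mu_{n,+})\mathsf A(\mu_{n,+})\mathsf U_n^{-1}$, then $\langle t|\mathsf u_n|t'\rangle=\frac{\varphi_n^{(t)}}{\varphi_n^{(t')}}\det_{\mathsf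 N}\mathcal U^{(t,t')}(\mu_{n,+})$.
   Context: Let $p\ge3$ be odd, $q\in\mathbb C$ with $q^p=1$ and $q^2$ a primitive $p$-th root of unity, $\mathsf N$ odd. Let $\eta_1^{(0)},\dots,\eta_{\mathsf N}^{(0)}$ be nonzero, $\eta_a^{(h)}=q^h\eta_a^{(0)}$, with $(\eta_a^{(h)})^2\ne(\eta_b^{(h')})^2$ for $a\ne b$; $\textsc k\ne0$ a constant; $\bar a$ a complex function; $\omega_1,\dots,\omega_{\mathsf N}$ functions nonvanishing at the points $\eta_a^{(h)}$. For $\mathbf h\in(\mathbb Z/p\mathbb Z)^{\mathsf N}$ put $\mathsf b_{\mathbf h}(\lambda)=\textsc k\prod_{a=1}^{\mathsf N}(\lambda/\eta_a^{(h_a)}-\eta_a^{(h_a)}/\lambda)$ and $V_{\mathbf h}=\prod_{1\le b<a\le\mathsf N}((\eta_a^{(h_a)})^2-(\eta_b^{(h_b)})^2)$; $\mathbf e_a$ is the $a$-th unit vector. Operators $\mathsf A(\lambda),\mathsf B(\lambda)$ act on a space $\mathcal R$ with basis $\{|\mathbf h\rangle\}$ (right SOV basis) such that $\mathsf B(\lambda)|\mathbf h\rangle=\mathsf b_{\mathbf h}(\lambda)|\mathbf h\rangle$ and $\mathsf A(\lambda)|\mathbf h\rangle=\sum_{a=1}^{\mathsf N}|\mathbf h+\mathbf e_a\rangle\prod_{b\ne a}\frac{\lambda/\eta_b^{(h_b)}-\eta_b^{(h_b)}/\lambda}{\eta_a^{(h_a)}/\eta_b^{(h_b)}-\eta_b^{(h_b)}/\eta_a^{(h_a)}}\bar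 a(\eta_a^{(h_a)})$; the dual space has covectors $\{\langle\mathbf h|\}$ with $\langle\mathbf h|\mathbf h'\rangle=\delta_{\mathbf h,\mathbf h'}\prod_{b=1}^{\mathsf N}\omega_b(\eta_b^{(h_b)})/V_{\mathbf h}$. Given functions $\bar Q_t$, $Q_{t'}$ define $\langle t|=\sum_{\mathbf h}\prod_{a=1}^{\mathsf N}\bar Q_t(\eta_a^{(h_a)})\,V_{\mathbf h}\,\langle\mathbf h|/\prod_b\omega_b(\eta_b^{(h_b)})$ and $|t'\rangle=\sum_{\mathbf h}\prod_{a=1}^{\mathsf N}Q_{t'}(\eta_a^{(h_a)})\,V_{\mathbf h}\,|\mathbf h\rangle/\prod_b\omega_b(\eta_b^{(h_b)})$ (in the paper $\bar Q_t,Q_{t'}$ solve Baxter equations and these are the left/right transfer-matrix eigenstates). For the consequence: $\mathsf U_n$ is the invertible shift operator of the lattice sine-Gordon chain, $\mathsf u_n$ the local Weyl generator at site $n$, $\mu_{n,+}=i\kappa_nq^{1/2}\xi_n$ with $\mathsf B(\mu_{n,+})$ invertible, and $\textsc k=\prod_{n}\kappa_n/i$. *)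

theory Defs
  imports Complex_Main "Jordan_Normal_Form.Determinant"
begin

text \<open>Basis vectors |h> are indexed by
  h in (Z/pZ)^N, represented as functions h :: nat => nat with h a < p for a in {1..N}
  and h a = 0 outside {1..N}. Vectors of the space R and covector coefficient functions
  are functions from such indices to complex numbers (only the values on the index set matter).\<close>

definition sov_idx :: "nat \<Rightarrow> nat \<Rightarrow> (nat \<Rightarrow> nat) set" where
  "sov_idx p N = {h. (\<forall>a\<in>{1..N}. h a < p) \<and> (\<forall>a. a \<notin> {1..N} \<longrightarrow> h a = 0)}"

definition sov_eta :: "complex \<Rightarrow> (nat \<Rightarrow> complex) \<Rightarrow> nat \<Rightarrow> nat \<Rightarrow> complex" where
  "sov_eta q eta0 a h = q ^ h * eta0 a"

definition sov_shift :: "nat \<Rightarrow> nat \<Rightarrow> (nat \<Rightarrow> nat) \<Rightarrow> (nat \<Rightarrow> nat)" where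
  "sov_shift p a h = h(a := (h a + 1) mod p)"

definition sov_b :: "complex \<Rightarrow> complex \<Rightarrow> (nat \<Rightarrow> complex) \<Rightarrow> nat \<Rightarrow> (nat \<Rightarrow> nat) \<Rightarrow> complex \<Rightarrow> complex" where
  "sov_b k q eta0 N h lam =
     k * (\<Prod>a=1..N. lam / sov_eta q eta0 a (h a) - sov_eta q eta0 a (h a) / lam)"

definition sov_V :: "complex \<Rightarrow> (nat \<Rightarrow> complex) \<Rightarrow> nat \<Rightarrow> (nat \<Rightarrow> nat) \<Rightarrow> complex" where
  "sov_V q eta0 N h =
     (\<Prod>b=1..N. \<Prod>a\<in>{b<..N}. (sov_eta q eta0 a (h a))^2 - (sov_eta q eta0 b (h b))^2)"

text \<open>Coefficient of |h + e_a> in A(lambda)|h>\<close>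
definition sov_Acoef :: "complex \<Rightarrow> (nat \<Rightarrow> complex) \<Rightarrow> (complex \<Rightarrow> complex) \<Rightarrow> nat \<Rightarrow>
    (nat \<Rightarrow> nat) \<Rightarrow> nat \<Rightarrow> complex \<Rightarrow> complex" where
  "sov_Acoef q eta0 abar N h a lam =
     (\<Prod>b\<in>{1..N} - {a}.
        (lam / sov_eta q eta0 b (h b) - sov_eta q eta0 b (h b) / lam) /
        (sov_eta q eta0 a (h a) / sov_eta q eta0 b (h b) - sov_eta q eta0 b (h b) / sov_eta q eta0 a (h a)))
     * abar (sov_eta q eta0 a (h a))"

definition sov_A :: "nat \<Rightarrow> complex \<Rightarrow> (nat \<Rightarrow> complex) \<Rightarrow> (complex \<Rightarrow> complex) \<Rightarrow> nat \<Rightarrow> complex \<Rightarrow>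
    ((nat \<Rightarrow> nat) \<Rightarrow> complex) \<Rightarrow> ((nat \<Rightarrow> nat) \<Rightarrow> complex)" where
  "sov_A p q eta0 abar N lam v =
     (\<lambda>h'. \<Sum>h\<in>sov_idx p N. v h *
        (\<Sum>a=1..N. if sov_shift p a h = h' then sov_Acoef q eta0 abar N h a lam else 0))"

definition sov_B :: "complex \<Rightarrow> complex \<Rightarrow> (nat \<Rightarrow> complex) \<Rightarrow> nat \<Rightarrow> complex \<Rightarrow>
    ((nat \<Rightarrow> nat) \<Rightarrow> complex) \<Rightarrow> ((nat \<Rightarrow> nat) \<Rightarrow> complex)" where
  "sov_B k q eta0 N lam v = (\<lambda>h. sov_b k q eta0 N h lam * v h)"

definition sov_B_invertible :: "nat \<Rightarrow> complex \<Rightarrow> complex \<Rightarrow> (nat \<Rightarrow> complex) \<Rightarrow> nat \<Rightarrow> complex \<Rightarrow> bool" where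
  "sov_B_invertible p k q eta0 N lam \<longleftrightarrow> (\<forall>h\<in>sov_idx p N. sov_b k q eta0 N h lam \<noteq> 0)"

text \<open>The inverse B^{-1}(lambda) (meaningful when B(lambda) is invertible)\<close>
definition sov_Binv :: "complex \<Rightarrow> complex \<Rightarrow> (nat \<Rightarrow> complex) \<Rightarrow> nat \<Rightarrow> complex \<Rightarrow>
    ((nat \<Rightarrow> nat) \<Rightarrow> complex) \<Rightarrow> ((nat \<Rightarrow> nat) \<Rightarrow> complex)" where
  "sov_Binv k q eta0 N lam v = (\<lambda>h. v h / sov_b k q eta0 N h lam)"

text \<open>Pairing of the covector sum_h l(h) <h| with the vector sum_h v(h) |h>, using
  <h|h'> = delta_{h,h'} prod_b omega_b(eta_b^(h_b)) / V_h\<close>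
definition sov_pair :: "nat \<Rightarrow> complex \<Rightarrow> (nat \<Rightarrow> complex) \<Rightarrow> (nat \<Rightarrow> complex \<Rightarrow> complex) \<Rightarrow> nat \<Rightarrow>
    ((nat \<Rightarrow> nat) \<Rightarrow> complex) \<Rightarrow> ((nat \<Rightarrow> nat) \<Rightarrow> complex) \<Rightarrow> complex" where
  "sov_pair p q eta0 omega N l v =
     (\<Sum>h\<in>sov_idx p N. l h * v h *
        (\<Prod>b=1..N. omega b (sov_eta q eta0 b (h b))) / sov_V q eta0 N h)"

text \<open>Coefficients of <t| (resp. |t'>) in the SOV basis, built from Qbar_t (resp. Q_t')\<close>
definition sov_state :: "complex \<Rightarrow> (nat \<Rightarrow> complex) \<Rightarrow> (nat \<Rightarrow> complex \<Rightarrow> complex) \<Rightarrow> nat \<Rightarrow>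
    (complex \<Rightarrow> complex) \<Rightarrow> ((nat \<Rightarrow> nat) \<Rightarrow> complex)" where
  "sov_state q eta0 omega N Q =
     (\<lambda>h. (\<Prod>a=1..N. Q (sov_eta q eta0 a (h a))) * sov_V q eta0 N h /
          (\<Prod>b=1..N. omega b (sov_eta q eta0 b (h b))))"

definition sov_apply :: "nat \<Rightarrow> nat \<Rightarrow> ((nat \<Rightarrow> nat) \<Rightarrow> (nat \<Rightarrow> nat) \<Rightarrow> complex) \<Rightarrow>
    ((nat \<Rightarrow> nat) \<Rightarrow> complex) \<Rightarrow> ((nat \<Rightarrow> nat) \<Rightarrow> complex)" where
  "sov_apply p N M v = (\<lambda>h. \<Sum>h'\<in>sov_idx p N. M h h' * v h')"

definition sov_Umat :: "nat \<Rightarrow> complex \<Rightarrow> (nat \<Rightarrow> complex) \<Rightarrow> complex \<Rightarrow> (complex \<Rightarrow> complex) \<Rightarrow>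
    (nat \<Rightarrow> complex \<Rightarrow> complex) \<Rightarrow> nat \<Rightarrow> (complex \<Rightarrow> complex) \<Rightarrow> (complex \<Rightarrow> complex) \<Rightarrow>
    complex \<Rightarrow> nat \<Rightarrow> nat \<Rightarrow> complex" where
  "sov_Umat p q eta0 k abar omega N Qbar Q lam a b =
     (if b < N then
        (eta0 a) ^ (2*b - 1) *
        (\<Sum>c=1..p. q ^ ((2*b - 1) * c) *
           Q (sov_eta q eta0 a c) * Qbar (sov_eta q eta0 a c) / omega a (sov_eta q eta0 a c))
      else
        (eta0 a) ^ (N - 1) / k *
        (\<Sum>h=1..p. q ^ ((N - 1) * h) * Q (sov_eta q eta0 a h) * Qbar (sov_eta q eta0 a (h + 1)) *
           abar (sov_eta q eta0 a h) /
           (omega a (sov_eta q eta0 a h) *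
            (lam / sov_eta q eta0 a (h + 1) - sov_eta q eta0 a (h + 1) / lam))))"

definition sov_detU :: "nat \<Rightarrow> complex \<Rightarrow> (nat \<Rightarrow> complex) \<Rightarrow> complex \<Rightarrow> (complex \<Rightarrow> complex) \<Rightarrow>
    (nat \<Rightarrow> complex \<Rightarrow> complex) \<Rightarrow> nat \<Rightarrow> (complex \<Rightarrow> complex) \<Rightarrow> (complex \<Rightarrow> complex) \<Rightarrow>
    complex \<Rightarrow> complex" where
  "sov_detU p q eta0 k abar omega N Qbar Q lam =
     det (mat N N (\<lambda>(i, j). sov_Umat p q eta0 k abar omega N Qbar Q lam (i + 1) (j + 1)))"

end

theory Submission
  imports Defs
begin

(* Write x_a = eta_a^(h_a).  Since B(lambda) is diagonal and A(lambda) moves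
   |h> to the neighbours |h + e_a>, the matrix element <t|B^-1(lambda)A(lambda)|t'> is a sum over
   the index set (Z/pZ)^N and over the sites a of explicit rational expressions.  In the summand
   for h and a all dependence on the other sites c <> a factorises, and the Vandermonde factor V_h
   turns the sum over a into the Laplace expansion, along the last column, of an N x N determinant
   whose columns are x^1, x^3, ..., x^(2N-3) (times a weight) and x^(N-1) (times another weight).
   Each row of that determinant only depends on one coordinate h_a, so by multilinearity the sum
   over h in (Z/pZ)^N enters the rows, and the resulting entries are the periodic sums U_{a,b}.  The second claim only uses that conjugating by U with eigenvectors
   on both sides multiplies matrix elements by phi_t / phi_t' (lemma conjugated_matrix_element). *)

section \<open>Vandermonde products\<close>

definition vandermonde_prod :: "nat \<Rightarrow> (nat \<Rightarrow> 'a::comm_ring_1) \<Rightarrow> 'a" where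
  "vandermonde_prod n z = (\<Prod>j<n. \<Prod>i<j. z j - z i)"

lemma vandermonde_prod_Suc:
  "vandermonde_prod (Suc n) z = (\<Prod>j<n. z (Suc j) - z 0) * vandermonde_prod n (\<lambda>i. z (Suc i))"
proof (induction n)
  case 0
  then show ?case by (simp add: vandermonde_prod_def)
next
  case (Suc n)
  have "vandermonde_prod (Suc (Suc n)) z = vandermonde_prod (Suc n) z * (\<Prod>i<Suc n. z (Suc n) - z i)"
    by (simp add: vandermonde_prod_def)
  also have "(\<Prod>i<Suc n. z (Suc n) - z i) = (z (Suc n) - z 0) * (\<Prod>i<n. z (Suc n) - z (Suc i))"
    by (subst prod.lessThan_Suc_shift) simp
  also note Suc
  finally show ?case
    by (simp add: vandermonde_prod_def ac_simps)
qed

lemma det_scale_rows: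
  "det (mat n n (\<lambda>(i,j). c i * f i j)) = (\<Prod>i<n. c i) * det (mat n n (\<lambda>(i,j). (f i j :: 'a::comm_ring_1)))"
proof -
  have "signof \<pi> * (\<Prod>i = 0..<n. mat n n (\<lambda>(i,j). c i * f i j) $$ (i, \<pi> i)) =
        (\<Prod>i<n. c i) * (signof \<pi> * (\<Prod>i = 0..<n. mat n n (\<lambda>(i,j). f i j) $$ (i, \<pi> i)))"
    if "\<pi> permutes {0..<n}" for \<pi>
  proof -
    have "(\<Prod>i = 0..<n. mat n n (\<lambda>(i,j). c i * f i j) $$ (i, \<pi> i)) = (\<Prod>i = 0..<n. c i * f i (\<pi> i))"
      and "(\<Prod>i = 0..<n. mat n n (\<lambda>(i,j). f i j) $$ (i, \<pi> i)) = (\<Prod>i = 0..<n. f i (\<pi> i))"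
      using that by (auto intro!: prod.cong simp: permutes_in_image)
    then show ?thesis by (simp add: prod.distrib atLeast0LessThan)
  qed
  then show ?thesis
    by (simp add: det_def'[of _ n] sum_distrib_left)
qed

(* The Vandermonde determinant, by the column operations  col_j := col_j - z_0 * col_(j-1). *)
lemma det_vandermonde:
  "det (mat n n (\<lambda>(i,j). z i ^ j)) = vandermonde_prod n (z :: nat \<Rightarrow> 'a::comm_ring_1)"
proof (induction n arbitrary: z)
  case 0
  then show ?case by (simp add: vandermonde_prod_def)
next
  case (Suc n)
  define A where "A = mat (Suc n) (Suc n) (\<lambda>(i,j). z i ^ j)"
  define C where "C = mat (Suc n) (Suc n) (\<lambda>(i,j). if i = j then 1 else if j = Suc i then - z 0 else (0::'a))"
  define B where "B = mat (Suc n) (Suc n) (\<lambda>(i,j). if j = 0 then 1 else (z i - z 0) * z i ^ (j - 1))"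
  have Ac: "A \<in> carrier_mat (Suc n) (Suc n)" and Cc: "C \<in> carrier_mat (Suc n) (Suc n)"
    and Bc: "B \<in> carrier_mat (Suc n) (Suc n)"
    by (auto simp: A_def B_def C_def)
  have "diag_mat C = map (\<lambda>i. 1) [0..<Suc n]"
    unfolding diag_mat_def by (rule map_cong) (auto simp: C_def)
  moreover have "upper_triangular C"
    unfolding upper_triangular_def C_def by auto
  ultimately have det_C: "det C = 1"
    using det_upper_triangular[OF _ Cc] by (simp add: map_replicate_const)
  have AC: "A * C = B"
  proof (rule eq_matI)
    fix i j assume "i < dim_row B" and "j < dim_col B"
    then have i: "i < Suc n" and j: "j < Suc n" by (auto simp: B_def)
    have "(A * C) $$ (i, j) = (\<Sum>k<Suc n. z i ^ k * C $$ (k, j))"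
      using i j by (simp add: A_def C_def scalar_prod_def atLeast0LessThan times_mat_def row_def col_def)
    also have "\<dots> = B $$ (i, j)"
    proof (cases j)
      case 0
      have "(\<Sum>k<Suc n. z i ^ k * C $$ (k, j)) = (\<Sum>k<Suc n. if k = 0 then 1 else 0)"
        using 0 by (intro sum.cong) (auto simp: C_def)
      then show ?thesis using 0 i by (simp add: B_def)
    next
      case (Suc j')
      have "(\<Sum>k<Suc n. z i ^ k * C $$ (k, j)) =
            (\<Sum>k<Suc n. (if k = j then z i ^ j else 0) + (if k = j' then - z 0 * z i ^ j' else 0))"
        using Suc j by (intro sum.cong) (auto simp: C_def)
      also have "\<dots> = z i ^ j - z 0 * z i ^ j'"
        using Suc j by (simp add: sum.distrib)
      finally show ?thesis using Suc i j by (simp add: B_def algebra_simps)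
    qed
    finally show "(A * C) $$ (i, j) = B $$ (i, j)" .
  qed (auto simp: A_def B_def C_def)
  have "det A = det B"
    using det_mult[OF Ac Cc] det_C AC by simp
  also have "det B = (\<Sum>j<Suc n. B $$ (0,j) * cofactor B 0 j)"
    by (rule laplace_expansion_row[OF Bc]) simp
  also have "\<dots> = det (mat_delete B 0 0)"
    by (subst sum.lessThan_Suc_shift) (simp add: B_def cofactor_def)
  also have "mat_delete B 0 0 = mat n n (\<lambda>(i,j). (z (Suc i) - z 0) * z (Suc i) ^ j)"
    by (rule eq_matI) (auto simp: mat_delete_def B_def)
  also have "det \<dots> = (\<Prod>i<n. z (Suc i) - z 0) * vandermonde_prod n (\<lambda>i. z (Suc i))"
    by (simp add: det_scale_rows Suc)
  finally show ?case
    by (simp add: A_def vandermonde_prod_Suc)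
qed

(* Removing the i-th point: moving it to the front costs the sign (-1)^i. *)
lemma vandermonde_prod_remove:
  assumes i: "i < Suc n"
  shows "vandermonde_prod (Suc n) z =
    (-1)^i * (\<Prod>j<n. z (insert_index i j) - z i) * vandermonde_prod n (\<lambda>j. z (insert_index i j))"
proof -
  define V where "V = mat (Suc n) (Suc n) (\<lambda>(r,j). z r ^ j)"
  define \<sigma> where "\<sigma> = (\<lambda>r. if r = 0 then i else insert_index i (r - 1))"
  have Vc: "V \<in> carrier_mat (Suc n) (Suc n)" by (simp add: V_def)
  have "swap_row_to_front V i = mat (Suc n) (Suc n) (\<lambda>(r,j). z (\<sigma> r) ^ j)"
    unfolding swap_row_to_front_result[OF Vc i]
    by (rule eq_matI) (use i in \<open>auto simp: V_def \<sigma>_def insert_index_def\<close>)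
  then have "vandermonde_prod (Suc n) (\<lambda>r. z (\<sigma> r)) = (-1)^i * vandermonde_prod (Suc n) z"
    using swap_row_to_front_det[OF Vc i] by (simp add: V_def det_vandermonde)
  moreover have "vandermonde_prod (Suc n) (\<lambda>r. z (\<sigma> r)) =
      (\<Prod>j<n. z (insert_index i j) - z i) * vandermonde_prod n (\<lambda>j. z (insert_index i j))"
    by (simp add: vandermonde_prod_Suc \<sigma>_def)
  ultimately have "(-1)^i * (-1)^i * vandermonde_prod (Suc n) z =
      (-1)^i * (\<Prod>j<n. z (insert_index i j) - z i) * vandermonde_prod n (\<lambda>j. z (insert_index i j))"
    by (simp add: mult.assoc)
  moreover have "(-1)^i * (-1)^i = (1::'a)"
    by (simp flip: power_add)
  ultimately show ?thesis
    by simp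
qed

lemma prod_insert_index:
  assumes "i < Suc n"
  shows "(\<Prod>j<n. g (insert_index i j)) = (\<Prod>c\<in>{0..<Suc n}-{i}. g c)"
proof -
  have "(\<Prod>c\<in>{0..<Suc n}-{i}. g c) = (\<Prod>c\<in>insert_index i ` {0..<n}. g c)"
    using insert_index_image[OF assms] by simp
  also have "\<dots> = (\<Prod>j\<in>{0..<n}. g (insert_index i j))"
    by (rule prod.reindex[OF insert_index_inj_on, unfolded comp_def])
  finally show ?thesis by (simp add: atLeast0LessThan)
qed

section \<open>A determinant with odd Vandermonde columns\<close>

(* Cofactor of the last column of the matrix of det_odd_vandermonde: the minor is a row-scaled
   Vandermonde determinant in the squares x_c^2, c <> i. *)
lemma odd_vandermonde_cofactor:
  fixes x F :: "nat \<Rightarrow> 'a::field"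
  assumes x_nz: "\<And>c. c < Suc n \<Longrightarrow> x c \<noteq> 0"
    and x_sep: "\<And>i c. i < Suc n \<Longrightarrow> c < Suc n \<Longrightarrow> i \<noteq> c \<Longrightarrow> x i ^ 2 \<noteq> x c ^ 2"
    and i: "i < Suc n"
  shows "(-1)^(i+n) * x i ^ n *
      det (mat n n (\<lambda>(a,b). x (insert_index i a) ^ (2*b+1) * F (insert_index i a))) =
    (\<Prod>c\<in>{0..<Suc n}-{i}. F c / (x i / x c - x c / x i)) * vandermonde_prod (Suc n) (\<lambda>c. x c ^ 2)"
proof -
  let ?k = "insert_index i"
  let ?z = "\<lambda>c. x c ^ 2"
  define P where "P = (\<Prod>a<n. ?z (?k a) - ?z i)"
  have k_less: "\<And>a. a < n \<Longrightarrow> ?k a < Suc n"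
    by (simp add: insert_index_def)
  have P_nz: "P \<noteq> 0"
    unfolding P_def using x_sep[OF k_less i] by auto
  have "mat n n (\<lambda>(a,b). x (?k a) ^ (2*b+1) * F (?k a)) = mat n n (\<lambda>(a,b). (x (?k a) * F (?k a)) * ?z (?k a) ^ b)"
    by (rule eq_matI) (auto simp: power_mult[symmetric] mult.commute)
  then have minor: "det (mat n n (\<lambda>(a,b). x (?k a) ^ (2*b+1) * F (?k a))) =
      (\<Prod>a<n. x (?k a) * F (?k a)) * vandermonde_prod n (\<lambda>a. ?z (?k a))"
    by (simp add: det_scale_rows det_vandermonde)
  have "(\<Prod>c\<in>{0..<Suc n}-{i}. F c / (x i / x c - x c / x i)) = (\<Prod>a<n. F (?k a) / (x i / x (?k a) - x (?k a) / x i))"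
    by (rule prod_insert_index[OF i, symmetric])
  also have "\<dots> = (\<Prod>a<n. ((-1) * x i) * (x (?k a) * F (?k a)) / (?z (?k a) - ?z i))"
  proof (rule prod.cong[OF refl])
    fix a assume "a \<in> {..<n}"
    then have "x (?k a) \<noteq> 0" "x i \<noteq> 0" "?z (?k a) - ?z i \<noteq> 0"
      using x_nz x_sep[OF _ i] k_less i by auto
    then show "F (?k a) / (x i / x (?k a) - x (?k a) / x i) = ((-1) * x i) * (x (?k a) * F (?k a)) / (?z (?k a) - ?z i)"
      by (simp add: field_simps power2_eq_square)
  qed
  also have "\<dots> = (-1)^n * x i ^ n * (\<Prod>a<n. x (?k a) * F (?k a)) / P"
    unfolding P_def prod_dividef prod.distrib by (simp add: power_mult_distrib)
  finally have weights: "(\<Prod>c\<in>{0..<Suc n}-{i}. F c / (x i / x c - x c / x i)) =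
      (-1)^n * x i ^ n * (\<Prod>a<n. x (?k a) * F (?k a)) / P" .
  have "vandermonde_prod (Suc n) ?z = (-1)^i * P * vandermonde_prod n (\<lambda>a. ?z (?k a))"
    unfolding P_def by (rule vandermonde_prod_remove[OF i])
  then show ?thesis
    unfolding minor weights using P_nz by (simp add: field_simps power_add)
qed

lemma det_odd_vandermonde:
  fixes x F G :: "nat \<Rightarrow> 'a::field"
  assumes x_nz: "\<And>c. c < Suc n \<Longrightarrow> x c \<noteq> 0"
    and x_sep: "\<And>i c. i < Suc n \<Longrightarrow> c < Suc n \<Longrightarrow> i \<noteq> c \<Longrightarrow> x i ^ 2 \<noteq> x c ^ 2"
  shows "det (mat (Suc n) (Suc n) (\<lambda>(i,j). if j < n then x i ^ (2*j+1) * F i else x i ^ n * G i)) =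
    (\<Sum>i<Suc n. G i * (\<Prod>c\<in>{0..<Suc n}-{i}. F c / (x i / x c - x c / x i)) *
       vandermonde_prod (Suc n) (\<lambda>c. x c ^ 2))"
proof -
  define M where "M = mat (Suc n) (Suc n) (\<lambda>(i,j). if j < n then x i ^ (2*j+1) * F i else x i ^ n * G i)"
  have "M \<in> carrier_mat (Suc n) (Suc n)" by (simp add: M_def)
  then have "det M = (\<Sum>i<Suc n. M $$ (i,n) * cofactor M i n)"
    by (rule laplace_expansion_column) simp
  also have "\<dots> = (\<Sum>i<Suc n. G i * (\<Prod>c\<in>{0..<Suc n}-{i}. F c / (x i / x c - x c / x i)) *
       vandermonde_prod (Suc n) (\<lambda>c. x c ^ 2))"
  proof (rule sum.cong[OF refl])
    fix i assume "i \<in> {..<Suc n}"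
    then have i: "i < Suc n" by simp
    have "mat_delete M i n = mat n n (\<lambda>(a,b). x (insert_index i a) ^ (2*b+1) * F (insert_index i a))"
      by (rule eq_matI) (auto simp: mat_delete_def M_def insert_index_def)
    then have cofactor: "M $$ (i,n) * cofactor M i n =
        G i * ((-1)^(i+n) * x i ^ n * det (mat n n (\<lambda>(a,b). x (insert_index i a) ^ (2*b+1) * F (insert_index i a))))"
      using i by (simp add: M_def cofactor_def)
    show "M $$ (i,n) * cofactor M i n = G i * (\<Prod>c\<in>{0..<Suc n}-{i}. F c / (x i / x c - x c / x i)) *
       vandermonde_prod (Suc n) (\<lambda>c. x c ^ 2)"
    proof -
      have "(-1)^(i+n) * x i ^ n * det (mat n n (\<lambda>(a,b). x (insert_index i a) ^ (2*b+1) * F (insert_index i a))) =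
          (\<Prod>c\<in>{0..<Suc n}-{i}. F c / (x i / x c - x c / x i)) * vandermonde_prod (Suc n) (\<lambda>c. x c ^ 2)"
        by (rule odd_vandermonde_cofactor[OF x_nz x_sep i])
      then show ?thesis
        unfolding cofactor by (simp only: mult.assoc)
    qed
  qed
  finally show ?thesis unfolding M_def .
qed

section \<open>Sums over the index set (Z/pZ)^N\<close>

(* (Z/pZ)^N is represented by functions that vanish outside the sites 1..N, so it is finite. *)
lemma finite_sov_idx: "finite (sov_idx p N)"
proof -
  let ?extend = "\<lambda>g a. if a \<in> {1..N} then g a else 0"
  have "sov_idx p N \<subseteq> ?extend ` PiE {1..N} (\<lambda>_. {..<p})"
  proof
    fix h assume "h \<in> sov_idx p N"
    then show "h \<in> ?extend ` PiE {1..N} (\<lambda>_. {..<p})"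
      by (intro image_eqI[where x="restrict h {1..N}"]) (auto simp: sov_idx_def fun_eq_iff)
  qed
  then show ?thesis
    by (rule finite_subset) (intro finite_imageI finite_PiE, auto)
qed

lemma sum_sov_idx_prod:
  "(\<Sum>h\<in>sov_idx p N. \<Prod>i<N. f i (h (Suc i))) = (\<Prod>i<N. \<Sum>t<p. (f i t :: 'a::comm_semiring_1))"
proof -
  have "(\<Prod>i<N. \<Sum>t<p. f i t) = (\<Sum>g\<in>PiE {..<N} (\<lambda>_. {..<p}). \<Prod>i<N. f i (g i))"
    by (rule prod_sum_PiE) auto
  also have "\<dots> = (\<Sum>h\<in>sov_idx p N. \<Prod>i<N. f i (h (Suc i)))"
    by (rule sum.reindex_bij_witness[where i = "\<lambda>h i. if i < N then h (Suc i) else undefined"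
        and j = "\<lambda>g a. if a \<in> {1..N} then g (a - 1) else 0"])
       (auto simp: sov_idx_def PiE_def extensional_def fun_eq_iff Pi_def intro!: prod.cong)
  finally show ?thesis by simp
qed

(* Multilinearity: if row i of a determinant only depends on the coordinate h_(i+1), the sum over
   (Z/pZ)^N of the determinants is the determinant of the row-wise sums. *)
lemma sum_sov_idx_det:
  "(\<Sum>h\<in>sov_idx p N. det (mat N N (\<lambda>(i,j). m i (h (Suc i)) j))) =
   det (mat N N (\<lambda>(i,j). \<Sum>t<p. (m i t j :: 'a::comm_ring_1)))"
proof -
  have det_expand: "det (mat N N (\<lambda>(i,j). f i j)) =
      (\<Sum>\<pi>\<in>{\<pi>. \<pi> permutes {0..<N}}. signof \<pi> * (\<Prod>i<N. f i (\<pi> i)))" for f :: "nat \<Rightarrow> nat \<Rightarrow> 'a"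
    unfolding det_def'[of "mat N N (\<lambda>(i,j). f i j)" N, simplified]
    by (intro sum.cong refl arg_cong2[where f="(*)"] prod.cong) (auto simp: permutes_in_image atLeast0LessThan)
  have "(\<Sum>h\<in>sov_idx p N. det (mat N N (\<lambda>(i,j). m i (h (Suc i)) j))) =
    (\<Sum>\<pi>\<in>{\<pi>. \<pi> permutes {0..<N}}. signof \<pi> * (\<Sum>h\<in>sov_idx p N. \<Prod>i<N. m i (h (Suc i)) (\<pi> i)))"
    unfolding det_expand by (subst sum.swap) (simp add: sum_distrib_left)
  also have "\<dots> = (\<Sum>\<pi>\<in>{\<pi>. \<pi> permutes {0..<N}}. signof \<pi> * (\<Prod>i<N. \<Sum>t<p. m i t (\<pi> i)))"
    by (intro sum.cong refl arg_cong2[where f="(*)"] sum_sov_idx_prod)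
  also have "\<dots> = det (mat N N (\<lambda>(i,j). \<Sum>t<p. m i t j))"
    unfolding det_expand ..
  finally show ?thesis .
qed

lemma sum_period_shift:
  fixes g :: "nat \<Rightarrow> 'a::cancel_comm_monoid_add"
  assumes "g p = g 0"
  shows "(\<Sum>t<p. g t) = (\<Sum>c=1..p. g c)"
proof -
  have "g 0 + (\<Sum>t<p. g t) = (\<Sum>t<Suc p. g t)"
    using assms by (simp add: add.commute)
  also have "\<dots> = g 0 + (\<Sum>c=1..p. g c)"
    by (subst sum.lessThan_Suc_shift) (simp add: sum.atLeast1_atMost_eq)
  finally show ?thesis by simp
qed

lemma prod_remove_Suc:
  "(\<Prod>c\<in>{1..N}-{Suc i}. g c) = (\<Prod>c\<in>{0..<N}-{i}. g (Suc c))"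
proof -
  have "{1..N}-{Suc i} = Suc ` ({0..<N}-{i})"
    by (simp add: image_set_diff atLeast0LessThan image_Suc_lessThan)
  then show ?thesis by (simp add: prod.reindex)
qed

section \<open>The SOV representation\<close>

lemma sov_V_vandermonde:
  "sov_V q eta0 N h = vandermonde_prod N (\<lambda>c. (sov_eta q eta0 (Suc c) (h (Suc c)))^2)"
proof (cases N)
  case 0
  then show ?thesis by (simp add: sov_V_def vandermonde_prod_def)
next
  case (Suc n)
  define z where "z = (\<lambda>c. (sov_eta q eta0 (Suc c) (h (Suc c)))^2)"
  have "sov_V q eta0 N h =
      (\<Prod>b<Suc n. \<Prod>a\<in>{Suc b<..Suc n}. (sov_eta q eta0 a (h a))^2 - (sov_eta q eta0 (Suc b) (h (Suc b)))^2)"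
    unfolding sov_V_def Suc by (simp add: prod.atLeast1_atMost_eq)
  also have "\<dots> = (\<Prod>b<Suc n. \<Prod>a\<in>{Suc b..n}. z a - z b)"
  proof (rule prod.cong[OF refl])
    fix b
    have "{Suc b<..Suc n} = {Suc (Suc b)..Suc n}"
      by auto
    also have "\<dots> = Suc ` {Suc b..n}"
      by (simp add: image_Suc_atLeastAtMost)
    finally show "(\<Prod>a\<in>{Suc b<..Suc n}. (sov_eta q eta0 a (h a))^2 - (sov_eta q eta0 (Suc b) (h (Suc b)))^2) =
        (\<Prod>a\<in>{Suc b..n}. z a - z b)"
      unfolding z_def by (simp only:) (rule prod.reindex[unfolded comp_def], simp)
  qed
  also have "\<dots> = (\<Prod>b<n. \<Prod>a\<in>{Suc b..n}. z a - z b)"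
    by simp
  also have "\<dots> = (\<Prod>a\<in>{..n}. \<Prod>b<a. z a - z b)"
    by (rule prod.nested_swap'[symmetric])
  finally show ?thesis
    unfolding vandermonde_prod_def Suc lessThan_Suc_atMost z_def .
qed

lemma sov_V_nonzero:
  assumes "\<forall>a\<in>{1..N}. \<forall>b\<in>{1..N}. \<forall>h h'. a \<noteq> b \<longrightarrow> (sov_eta q eta0 a h)^2 \<noteq> (sov_eta q eta0 b h')^2"
  shows "sov_V q eta0 N h \<noteq> 0"
  using assms by (auto simp: sov_V_def)

lemma sov_pair_state:
  assumes "\<forall>a\<in>{1..N}. \<forall>b\<in>{1..N}. \<forall>h h'. a \<noteq> b \<longrightarrow> (sov_eta q eta0 a h)^2 \<noteq> (sov_eta q eta0 b h')^2"
    and "\<forall>a\<in>{1..N}. \<forall>h. omega a (sov_eta q eta0 a h) \<noteq> 0"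
  shows "sov_pair p q eta0 omega N (sov_state q eta0 omega N Qbar) w =
    (\<Sum>h\<in>sov_idx p N. (\<Prod>a=1..N. Qbar (sov_eta q eta0 a (h a))) * w h)"
  unfolding sov_pair_def sov_state_def
  by (intro sum.cong refl) (use assms sov_V_nonzero[OF assms(1)] in simp)

(* One-site weights of the determinant: sov_F weighs the columns 1, ..., N-1 and sov_G the last one. *)
definition sov_F :: "(complex \<Rightarrow> complex) \<Rightarrow> (complex \<Rightarrow> complex) \<Rightarrow> (nat \<Rightarrow> complex \<Rightarrow> complex) \<Rightarrow>
    nat \<Rightarrow> complex \<Rightarrow> complex" where
  "sov_F Qbar Q omega a y = Q y * Qbar y / omega a y"

definition sov_G :: "complex \<Rightarrow> complex \<Rightarrow> complex \<Rightarrow> (complex \<Rightarrow> complex) \<Rightarrow> (complex \<Rightarrow> complex) \<Rightarrow>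
    (complex \<Rightarrow> complex) \<Rightarrow> (nat \<Rightarrow> complex \<Rightarrow> complex) \<Rightarrow> nat \<Rightarrow> complex \<Rightarrow> complex" where
  "sov_G q k lam abar Qbar Q omega a y =
     Q y * Qbar (q * y) * abar y / (omega a y * k * (lam / (q * y) - q * y / lam))"

(* From here on q is a p-th root of unity, so exponents of q and the coordinates h_a live in Z/pZ. *)
context
  fixes p :: nat and q :: complex
  assumes p_pos: "p > 0" and q_p: "q ^ p = 1"
begin

lemma q_power_mod: "q ^ (m mod p) = q ^ m"
proof -
  have "q ^ m = q ^ (m mod p + p * (m div p))"
    by simp
  also have "\<dots> = q ^ (m mod p)"
    by (simp only: power_add power_mult q_p power_one mult_1_right)
  finally show ?thesis ..
qed

lemma q_power_period: "q ^ (r * p) = 1"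
  by (simp add: mult.commute[of r] power_mult q_p)

lemma sov_shift_in_idx: "h \<in> sov_idx p N \<Longrightarrow> a \<in> {1..N} \<Longrightarrow> sov_shift p a h \<in> sov_idx p N"
  using p_pos by (auto simp: sov_idx_def sov_shift_def)

lemma sov_eta_shift:
  "sov_eta q eta0 c (sov_shift p a h c) =
    (if c = a then q * sov_eta q eta0 a (h a) else sov_eta q eta0 c (h c))"
  by (simp add: sov_shift_def sov_eta_def q_power_mod)

lemma prod_sov_shift:
  assumes a: "a \<in> {1..N}"
  shows "(\<Prod>c=1..N. f (sov_eta q eta0 c (sov_shift p a h c))) =
    f (q * sov_eta q eta0 a (h a)) * (\<Prod>c\<in>{1..N}-{a}. f (sov_eta q eta0 c (h c)))"
proof -
  have "(\<Prod>c\<in>{1..N}-{a}. f (sov_eta q eta0 c (sov_shift p a h c))) =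
      (\<Prod>c\<in>{1..N}-{a}. f (sov_eta q eta0 c (h c)))"
    by (rule prod.cong) (auto simp: sov_eta_shift)
  then show ?thesis
    using a by (simp add: prod.remove sov_eta_shift)
qed

lemma sum_sov_A:
  "(\<Sum>h'\<in>sov_idx p N. f h' * sov_A p q eta0 abar N lam v h') =
    (\<Sum>h\<in>sov_idx p N. \<Sum>a=1..N. v h * sov_Acoef q eta0 abar N h a lam * f (sov_shift p a h))"
proof -
  let ?S = "sov_idx p N" and ?Ac = "\<lambda>h a. sov_Acoef q eta0 abar N h a lam"
  have "(\<Sum>h'\<in>?S. f h' * sov_A p q eta0 abar N lam v h') =
      (\<Sum>h'\<in>?S. \<Sum>h\<in>?S. \<Sum>a=1..N. if sov_shift p a h = h' then v h * ?Ac h a * f h' else 0)"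
    unfolding sov_A_def by (auto simp: sum_distrib_left intro!: sum.cong)
  also have "\<dots> = (\<Sum>h\<in>?S. \<Sum>a=1..N. \<Sum>h'\<in>?S. if sov_shift p a h = h' then v h * ?Ac h a * f h' else 0)"
    by (subst sum.swap) (intro sum.cong refl, rule sum.swap)
  also have "\<dots> = (\<Sum>h\<in>?S. \<Sum>a=1..N. v h * ?Ac h a * f (sov_shift p a h))"
    by (intro sum.cong refl) (simp add: sov_shift_in_idx finite_sov_idx)
  finally show ?thesis .
qed

lemma sov_summand:
  fixes eta0 :: "nat \<Rightarrow> complex"
  assumes eta0_nz: "\<forall>a\<in>{1..N}. eta0 a \<noteq> 0"
    and eta_sep: "\<forall>a\<in>{1..N}. \<forall>b\<in>{1..N}. \<forall>h h'. a \<noteq> b \<longrightarrow> (sov_eta q eta0 a h)^2 \<noteq> (sov_eta q eta0 b h')^2"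
    and k_nz: "k \<noteq> 0"
    and omega_nz: "\<forall>a\<in>{1..N}. \<forall>h. omega a (sov_eta q eta0 a h) \<noteq> 0"
    and B_inv: "sov_B_invertible p k q eta0 N lam"
    and h: "h \<in> sov_idx p N" and a: "a \<in> {1..N}"
  shows "sov_state q eta0 omega N Q h * sov_Acoef q eta0 abar N h a lam *
      ((\<Prod>c=1..N. Qbar (sov_eta q eta0 c (sov_shift p a h c))) / sov_b k q eta0 N (sov_shift p a h) lam) =
    sov_G q k lam abar Qbar Q omega a (sov_eta q eta0 a (h a)) *
      (\<Prod>c\<in>{1..N}-{a}. sov_F Qbar Q omega c (sov_eta q eta0 c (h c)) /
         (sov_eta q eta0 a (h a) / sov_eta q eta0 c (h c) - sov_eta q eta0 c (h c) / sov_eta q eta0 a (h a))) *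
      sov_V q eta0 N h"
proof -
  define x where "x c = sov_eta q eta0 c (h c)" for c
  define L where "L y = lam / y - y / lam" for y
  define D where "D c = x a / x c - x c / x a" for c
  let ?R = "{1..N}-{a}"
  have q_nz: "q \<noteq> 0"
    using q_p p_pos by (auto simp: power_0_left)
  have b_shift: "sov_b k q eta0 N (sov_shift p a h) lam = k * (L (q * x a) * (\<Prod>c\<in>?R. L (x c)))"
    unfolding sov_b_def prod_sov_shift[OF a, where f=L, unfolded L_def] x_def L_def ..
  have state: "sov_state q eta0 omega N Q h =
      Q (x a) * (\<Prod>c\<in>?R. Q (x c)) * sov_V q eta0 N h / (omega a (x a) * (\<Prod>c\<in>?R. omega c (x c)))"
    unfolding sov_state_def x_def using a by (simp add: prod.remove)
  have Acoef: "sov_Acoef q eta0 abar N h a lam = (\<Prod>c\<in>?R. L (x c)) / (\<Prod>c\<in>?R. D c) * abar (x a)"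
    unfolding sov_Acoef_def x_def L_def D_def by (simp add: prod_dividef)
  have F_prod: "(\<Prod>c\<in>?R. sov_F Qbar Q omega c (x c) / D c) =
      (\<Prod>c\<in>?R. Q (x c)) * (\<Prod>c\<in>?R. Qbar (x c)) / ((\<Prod>c\<in>?R. omega c (x c)) * (\<Prod>c\<in>?R. D c))"
    by (simp add: sov_F_def prod_dividef prod.distrib)
  have x_nz: "x c \<noteq> 0" if "c \<in> {1..N}" for c
    using eta0_nz q_nz that by (simp add: x_def sov_eta_def)
  have "sov_b k q eta0 N (sov_shift p a h) lam \<noteq> 0"
    using B_inv sov_shift_in_idx[OF h a] by (simp add: sov_B_invertible_def)
  then have L_nz: "L (q * x a) \<noteq> 0" "(\<Prod>c\<in>?R. L (x c)) \<noteq> 0"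
    by (auto simp: b_shift)
  have omega_prod_nz: "omega a (x a) \<noteq> 0" "(\<Prod>c\<in>?R. omega c (x c)) \<noteq> 0"
    using omega_nz a by (auto simp: x_def)
  have "D c \<noteq> 0" if "c \<in> ?R" for c
  proof -
    have "D c = ((x a)^2 - (x c)^2) / (x a * x c)"
      using x_nz a that by (simp add: D_def field_simps power2_eq_square)
    then show ?thesis
      using eta_sep a that x_nz by (auto simp: x_def)
  qed
  then have D_nz: "(\<Prod>c\<in>?R. D c) \<noteq> 0"
    by simp
  show ?thesis
    unfolding prod_sov_shift[OF a] b_shift state Acoef x_def[symmetric] D_def[symmetric] F_prod
    using k_nz L_nz omega_prod_nz D_nz
    by (simp add: sov_G_def L_def[symmetric] field_simps)
qed

lemma sov_eta_power: "sov_eta q eta0 a t ^ r = eta0 a ^ r * q ^ (r * t)"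
  by (simp add: sov_eta_def power_mult_distrib mult.commute[of r t] power_mult)

lemma sum_period_sov_eta:
  "(\<Sum>t<p. sov_eta q eta0 a t ^ r * W (sov_eta q eta0 a t)) =
    eta0 a ^ r * (\<Sum>c=1..p. q ^ (r * c) * W (sov_eta q eta0 a c))"
proof -
  have "(\<Sum>t<p. sov_eta q eta0 a t ^ r * W (sov_eta q eta0 a t)) =
      eta0 a ^ r * (\<Sum>t<p. q ^ (r * t) * W (sov_eta q eta0 a t))"
    by (simp add: sov_eta_power sum_distrib_left mult_ac)
  also have "(\<Sum>t<p. q ^ (r * t) * W (sov_eta q eta0 a t)) = (\<Sum>c=1..p. q ^ (r * c) * W (sov_eta q eta0 a c))"
    by (rule sum_period_shift) (simp add: q_power_period sov_eta_def q_p)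
  finally show ?thesis .
qed

lemma sov_Umat_column:
  assumes "Suc j < N"
  shows "sov_Umat p q eta0 k abar omega N Qbar Q lam a (Suc j) =
    (\<Sum>t<p. sov_eta q eta0 a t ^ (2*j+1) * sov_F Qbar Q omega a (sov_eta q eta0 a t))"
  unfolding sum_period_sov_eta using assms by (simp add: sov_Umat_def sov_F_def mult.assoc)

lemma sov_Umat_last_column:
  "sov_Umat p q eta0 k abar omega N Qbar Q lam a N =
    (\<Sum>t<p. sov_eta q eta0 a t ^ (N-1) * sov_G q k lam abar Qbar Q omega a (sov_eta q eta0 a t))"
proof -
  define g where "g c = q ^ ((N-1) * c) * Q (sov_eta q eta0 a c) * Qbar (sov_eta q eta0 a (c + 1)) *
      abar (sov_eta q eta0 a c) /
      (omega a (sov_eta q eta0 a c) * (lam / sov_eta q eta0 a (c + 1) - sov_eta q eta0 a (c + 1) / lam))" for c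
  have eta_Suc: "q * sov_eta q eta0 a c = sov_eta q eta0 a (c + 1)" for c
    by (simp add: sov_eta_def)
  have weight: "q ^ ((N-1) * c) * sov_G q k lam abar Qbar Q omega a (sov_eta q eta0 a c) = g c / k" for c
    unfolding sov_G_def eta_Suc g_def by (simp add: ac_simps)
  have "sov_Umat p q eta0 k abar omega N Qbar Q lam a N = eta0 a ^ (N-1) / k * (\<Sum>c=1..p. g c)"
    by (simp add: sov_Umat_def g_def)
  also have "\<dots> = eta0 a ^ (N-1) * (\<Sum>c=1..p. g c / k)"
    by (simp only: sum_divide_distrib[symmetric] times_divide_eq_left times_divide_eq_right)
  finally show ?thesis
    unfolding sum_period_sov_eta weight .
qed

lemma sov_matrix_element_BinvA:
  fixes eta0 :: "nat \<Rightarrow> complex"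
  assumes N_pos: "N > 0"
    and eta0_nz: "\<forall>a\<in>{1..N}. eta0 a \<noteq> 0"
    and eta_sep: "\<forall>a\<in>{1..N}. \<forall>b\<in>{1..N}. \<forall>h h'. a \<noteq> b \<longrightarrow> (sov_eta q eta0 a h)^2 \<noteq> (sov_eta q eta0 b h')^2"
    and k_nz: "k \<noteq> 0"
    and omega_nz: "\<forall>a\<in>{1..N}. \<forall>h. omega a (sov_eta q eta0 a h) \<noteq> 0"
    and B_inv: "sov_B_invertible p k q eta0 N lam"
  shows "sov_pair p q eta0 omega N (sov_state q eta0 omega N Qbar)
      (sov_Binv k q eta0 N lam (sov_A p q eta0 abar N lam (sov_state q eta0 omega N Q))) =
    sov_detU p q eta0 k abar omega N Qbar Q lam"
proof -
  obtain n where N: "N = Suc n"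
    using N_pos by (cases N) auto
  let ?S = "sov_idx p N"
  let ?v = "sov_state q eta0 omega N Q"
  let ?F = "sov_F Qbar Q omega" and ?G = "sov_G q k lam abar Qbar Q omega"
  define weight where "weight h' = (\<Prod>c=1..N. Qbar (sov_eta q eta0 c (h' c))) / sov_b k q eta0 N h' lam" for h'
  define m where "m i t j = (if j < n then sov_eta q eta0 (Suc i) t ^ (2*j+1) * ?F (Suc i) (sov_eta q eta0 (Suc i) t)
      else sov_eta q eta0 (Suc i) t ^ n * ?G (Suc i) (sov_eta q eta0 (Suc i) t))" for i t j
  have expansion: "(\<Sum>a=1..N. ?v h * sov_Acoef q eta0 abar N h a lam * weight (sov_shift p a h)) =
      det (mat N N (\<lambda>(i,j). m i (h (Suc i)) j))" if h: "h \<in> ?S" for h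
  proof -
    let ?x = "\<lambda>c. sov_eta q eta0 (Suc c) (h (Suc c))"
    have x_nz: "?x c \<noteq> 0" if "c < Suc n" for c
      using eta0_nz that q_p p_pos N by (auto simp: sov_eta_def power_0_left)
    have x_sep: "(?x i)^2 \<noteq> (?x c)^2" if "i < Suc n" "c < Suc n" "i \<noteq> c" for i c
      using eta_sep that N by simp
    have "(\<Sum>a=1..N. ?v h * sov_Acoef q eta0 abar N h a lam * weight (sov_shift p a h)) =
        (\<Sum>i<N. ?v h * sov_Acoef q eta0 abar N h (Suc i) lam * weight (sov_shift p (Suc i) h))"
      by (simp add: sum.atLeast1_atMost_eq)
    also have "\<dots> = (\<Sum>i<N. ?G (Suc i) (?x i) * (\<Prod>c\<in>{0..<N}-{i}. ?F (Suc c) (?x c) / (?x i / ?x c - ?x c / ?x i)) *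
          vandermonde_prod N (\<lambda>c. (?x c)^2))"
    proof (intro sum.cong refl)
      fix i assume "i \<in> {..<N}"
      then have "Suc i \<in> {1..N}" by simp
      from sov_summand[OF eta0_nz eta_sep k_nz omega_nz B_inv h this]
      show "?v h * sov_Acoef q eta0 abar N h (Suc i) lam * weight (sov_shift p (Suc i) h) =
          ?G (Suc i) (?x i) * (\<Prod>c\<in>{0..<N}-{i}. ?F (Suc c) (?x c) / (?x i / ?x c - ?x c / ?x i)) *
          vandermonde_prod N (\<lambda>c. (?x c)^2)"
        unfolding weight_def prod_remove_Suc sov_V_vandermonde .
    qed
    also have "\<dots> = det (mat N N (\<lambda>(i,j). if j < n then ?x i ^ (2*j+1) * ?F (Suc i) (?x i)
        else ?x i ^ n * ?G (Suc i) (?x i)))"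
      unfolding N by (rule det_odd_vandermonde[symmetric]) (use x_nz x_sep in auto)
    finally show ?thesis
      by (simp add: m_def)
  qed
  have column_sums: "(\<Sum>t<p. m i t j) = sov_Umat p q eta0 k abar omega N Qbar Q lam (Suc i) (Suc j)"
    if "j < N" for i j
  proof (cases "j < n")
    case True
    have "(\<Sum>t<p. m i t j) = (\<Sum>t<p. sov_eta q eta0 (Suc i) t ^ (2*j+1) * ?F (Suc i) (sov_eta q eta0 (Suc i) t))"
      by (simp only: m_def if_P[OF True])
    also have "\<dots> = sov_Umat p q eta0 k abar omega N Qbar Q lam (Suc i) (Suc j)"
      by (rule sov_Umat_column[symmetric]) (simp add: N True)
    finally show ?thesis .
  next
    case False
    then have "j = n" "N - 1 = n"
      using that N by simp_all
    then have "(\<Sum>t<p. m i t j) = (\<Sum>t<p. sov_eta q eta0 (Suc i) t ^ (N-1) * ?G (Suc i) (sov_eta q eta0 (Suc i) t))"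
      by (simp add: m_def)
    also have "\<dots> = sov_Umat p q eta0 k abar omega N Qbar Q lam (Suc i) (Suc j)"
      using \<open>j = n\<close> N by (simp only: sov_Umat_last_column)
    finally show ?thesis .
  qed
  have "sov_pair p q eta0 omega N (sov_state q eta0 omega N Qbar)
      (sov_Binv k q eta0 N lam (sov_A p q eta0 abar N lam ?v)) =
      (\<Sum>h'\<in>?S. weight h' * sov_A p q eta0 abar N lam ?v h')"
    unfolding sov_pair_state[OF eta_sep omega_nz] sov_Binv_def weight_def by (simp add: ac_simps)
  also have "\<dots> = (\<Sum>h\<in>?S. \<Sum>a=1..N. ?v h * sov_Acoef q eta0 abar N h a lam * weight (sov_shift p a h))"
    by (rule sum_sov_A)
  also have "\<dots> = (\<Sum>h\<in>?S. det (mat N N (\<lambda>(i,j). m i (h (Suc i)) j)))"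
    by (intro sum.cong refl expansion)
  also have "\<dots> = det (mat N N (\<lambda>(i,j). \<Sum>t<p. m i t j))"
    by (rule sum_sov_idx_det)
  also have "\<dots> = sov_detU p q eta0 k abar omega N Qbar Q lam"
    unfolding sov_detU_def by (intro arg_cong[where f=det] eq_matI) (auto simp: column_sums)
  finally show ?thesis .
qed

end

section \<open>Conjugation by an operator with eigenvectors on both sides\<close>

lemma sov_pair_scale: "sov_pair p q eta0 omega N l (\<lambda>h. c * v h) = c * sov_pair p q eta0 omega N l v"
  unfolding sov_pair_def by (simp add: sum_distrib_left mult_ac)

lemma sov_BinvA_scale:
  assumes "\<forall>h\<in>sov_idx p N. v h = c * v' h"
  shows "sov_Binv k q eta0 N lam (sov_A p q eta0 abar N lam v) =
    (\<lambda>h. c * sov_Binv k q eta0 N lam (sov_A p q eta0 abar N lam v') h)"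
  unfolding sov_Binv_def sov_A_def using assms
  by (simp add: sum_distrib_left mult.assoc cong: sum.cong)

lemma sov_apply_inverse_eigenvector:
  assumes left_inverse: "\<forall>h\<in>sov_idx p N. \<forall>h'\<in>sov_idx p N.
      (\<Sum>g\<in>sov_idx p N. Uinv h g * U g h') = (if h = h' then 1 else 0)"
    and eigen: "\<forall>h\<in>sov_idx p N. sov_apply p N U w h = phi * w h"
    and phi_nz: "phi \<noteq> (0::complex)"
    and h: "h \<in> sov_idx p N"
  shows "sov_apply p N Uinv w h = w h / phi"
proof -
  let ?S = "sov_idx p N"
  have "sov_apply p N Uinv w h = (\<Sum>g\<in>?S. Uinv h g * ((\<Sum>g'\<in>?S. U g g' * w g') / phi))"
    unfolding sov_apply_def using eigen phi_nz by (intro sum.cong refl) (simp add: sov_apply_def)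
  also have "\<dots> = (\<Sum>g'\<in>?S. (\<Sum>g\<in>?S. Uinv h g * U g g') * w g') / phi"
    by (simp add: sum_distrib_left sum_distrib_right sum_divide_distrib mult_ac) (rule sum.swap)
  also have "\<dots> = (\<Sum>g'\<in>?S. if h = g' then w g' else 0) / phi"
    using left_inverse h by (intro arg_cong[where f="\<lambda>s. s / phi"] sum.cong) auto
  also have "\<dots> = w h / phi"
    using h by (simp add: finite_sov_idx)
  finally show ?thesis .
qed

lemma conjugated_matrix_element:
  assumes left_inverse: "\<forall>h\<in>sov_idx p N. \<forall>h'\<in>sov_idx p N.
      (\<Sum>g\<in>sov_idx p N. Uinv h g * U g h') = (if h = h' then 1 else 0)"
    and eigen_left: "\<forall>v. sov_pair p q eta0 omega N l (sov_apply p N U v) = phi_l * sov_pair p q eta0 omega N l v"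
    and eigen_right: "\<forall>h\<in>sov_idx p N. sov_apply p N U w h = phi_w * w h"
    and phi_w_nz: "phi_w \<noteq> 0"
    and X_scale: "\<And>c v v'. \<forall>h\<in>sov_idx p N. v h = c * v' h \<Longrightarrow> X v = (\<lambda>h. c * X v' h)"
  shows "sov_pair p q eta0 omega N l (sov_apply p N U (X (sov_apply p N Uinv w))) =
    phi_l / phi_w * sov_pair p q eta0 omega N l (X w)"
proof -
  have "X (sov_apply p N Uinv w) = (\<lambda>h. inverse phi_w * X w h)"
    by (rule X_scale)
       (simp add: sov_apply_inverse_eigenvector[OF left_inverse eigen_right phi_w_nz] field_simps)
  then show ?thesis
    using eigen_left by (simp add: sov_pair_scale divide_inverse)
qed

theorem mainTheorem8:
  fixes p N :: nat
    and q k :: complex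
    and eta0 :: "nat \<Rightarrow> complex"
    and abar :: "complex \<Rightarrow> complex"
    and omega :: "nat \<Rightarrow> complex \<Rightarrow> complex"
    and Qbar Q :: "complex \<Rightarrow> complex"
  assumes p_odd: "odd p" and p_ge: "p \<ge> 3"
    and q_p: "q ^ p = 1"
    and q2_prim: "\<forall>j. 0 < j \<and> j < p \<longrightarrow> (q^2) ^ j \<noteq> 1"
    and N_odd: "odd N"
    and eta0_nz: "\<forall>a\<in>{1..N}. eta0 a \<noteq> 0"
    and eta_sep: "\<forall>a\<in>{1..N}. \<forall>b\<in>{1..N}. \<forall>h h'. a \<noteq> b \<longrightarrow>
                    (sov_eta q eta0 a h)^2 \<noteq> (sov_eta q eta0 b h')^2"
    and k_nz: "k \<noteq> 0"
    and omega_nz: "\<forall>a\<in>{1..N}. \<forall>h. omega a (sov_eta q eta0 a h) \<noteq> 0"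
  shows
    "(\<forall>lam. lam \<noteq> 0 \<and> sov_B_invertible p k q eta0 N lam \<and>
            (\<forall>a\<in>{1..N}. \<forall>h. lam \<noteq> sov_eta q eta0 a h \<and> lam \<noteq> - sov_eta q eta0 a h) \<longrightarrow>
       sov_pair p q eta0 omega N (sov_state q eta0 omega N Qbar)
         (sov_Binv k q eta0 N lam (sov_A p q eta0 abar N lam (sov_state q eta0 omega N Q)))
       = sov_detU p q eta0 k abar omega N Qbar Q lam)
   \<and>
    (\<forall>(kappa :: nat \<Rightarrow> complex) (xi :: nat \<Rightarrow> complex) (qh :: complex) (n :: nat)
        (U :: (nat \<Rightarrow> nat) \<Rightarrow> (nat \<Rightarrow> nat) \<Rightarrow> complex)
        (Uinv :: (nat \<Rightarrow> nat) \<Rightarrow> (nat \<Rightarrow> nat) \<Rightarrow> complex)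
        (phi_t :: complex) (phi_t' :: complex) (mu :: complex).
       n \<in> {1..N} \<and> qh^2 = q \<and> k = (\<Prod>m=1..N. kappa m / \<i>) \<and>
       mu = \<i> * kappa n * qh * xi n \<and>
       sov_B_invertible p k q eta0 N mu \<and>
       (\<forall>h\<in>sov_idx p N. \<forall>h'\<in>sov_idx p N.
          (\<Sum>g\<in>sov_idx p N. U h g * Uinv g h') = (if h = h' then 1 else 0) \<and>
          (\<Sum>g\<in>sov_idx p N. Uinv h g * U g h') = (if h = h' then 1 else 0)) \<and>
       (\<forall>v. sov_pair p q eta0 omega N (sov_state q eta0 omega N Qbar) (sov_apply p N U v)
             = phi_t * sov_pair p q eta0 omega N (sov_state q eta0 omega N Qbar) v) \<and>
       (\<forall>h\<in>sov_idx p N. sov_apply p N U (sov_state q eta0 omega N Q) h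
             = phi_t' * sov_state q eta0 omega N Q h) \<and>
       phi_t' \<noteq> 0
     \<longrightarrow>
       sov_pair p q eta0 omega N (sov_state q eta0 omega N Qbar)
         (sov_apply p N U (sov_Binv k q eta0 N mu (sov_A p q eta0 abar N mu
            (sov_apply p N Uinv (sov_state q eta0 omega N Q)))))
       = phi_t / phi_t' * sov_detU p q eta0 k abar omega N Qbar Q mu)"
proof -
  have p_pos: "p > 0" and N_pos: "N > 0"
    using p_ge N_odd by (auto intro: odd_pos)
  note matrix_element = sov_matrix_element_BinvA[OF p_pos q_p N_pos eta0_nz eta_sep k_nz omega_nz]
  show ?thesis
  proof (intro conjI allI impI; (elim conjE)?)
    fix lam assume "sov_B_invertible p k q eta0 N lam"
    then show "sov_pair p q eta0 omega N (sov_state q eta0 omega N Qbar)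
        (sov_Binv k q eta0 N lam (sov_A p q eta0 abar N lam (sov_state q eta0 omega N Q))) =
      sov_detU p q eta0 k abar omega N Qbar Q lam"
      by (rule matrix_element)
  next
    fix U Uinv :: "(nat \<Rightarrow> nat) \<Rightarrow> (nat \<Rightarrow> nat) \<Rightarrow> complex" and phi_t phi_t' mu :: complex
    assume B_inv: "sov_B_invertible p k q eta0 N mu"
      and inverse: "\<forall>h\<in>sov_idx p N. \<forall>h'\<in>sov_idx p N.
          (\<Sum>g\<in>sov_idx p N. U h g * Uinv g h') = (if h = h' then 1 else 0) \<and>
          (\<Sum>g\<in>sov_idx p N. Uinv h g * U g h') = (if h = h' then 1 else 0)"
      and eigen_left: "\<forall>v. sov_pair p q eta0 omega N (sov_state q eta0 omega N Qbar) (sov_apply p N U v)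
             = phi_t * sov_pair p q eta0 omega N (sov_state q eta0 omega N Qbar) v"
      and eigen_right: "\<forall>h\<in>sov_idx p N. sov_apply p N U (sov_state q eta0 omega N Q) h
             = phi_t' * sov_state q eta0 omega N Q h"
      and "phi_t' \<noteq> 0"
    have "\<forall>h\<in>sov_idx p N. \<forall>h'\<in>sov_idx p N.
        (\<Sum>g\<in>sov_idx p N. Uinv h g * U g h') = (if h = h' then 1 else 0)"
      using inverse by blast
    from conjugated_matrix_element[where X="\<lambda>v. sov_Binv k q eta0 N mu (sov_A p q eta0 abar N mu v)",
        OF this eigen_left eigen_right \<open>phi_t' \<noteq> 0\<close> sov_BinvA_scale]
    show "sov_pair p q eta0 omega N (sov_state q eta0 omega N Qbar)
        (sov_apply p N U (sov_Binv k q eta0 N mu (sov_A p q eta0 abar N mu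
          (sov_apply p N Uinv (sov_state q eta0 omega N Q))))) =
      phi_t / phi_t' * sov_detU p q eta0 k abar omega N Qbar Q mu"
      by (simp only: matrix_element[OF B_inv])
  qed
qed

end
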